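(* Consider the parallel service system with $\lambda<\sum_{n=1}^N\mu_n$ under the softmax WSQ policy with sufficiently small temperature $\iota>0$. Then for every $w\in\mathbb{R}^N_{>0}$, the Markov chain of queue lengths induced by $\pi_w$ is irreducible, ergodic and positive Harris recurrent.
   Context: Parallel service system: $N$ parallel queues with state $x\in\mathbb{Z}^N_{\ge0}$ (queue lengths), Poisson arrivals at rate $\lambda>0$, exponential service rates $\mu_n>0$ at server $n$; an arriving job joins queue $a$ with probability $\pi_w(a\mid x)$. This gives a Markov chain with transitions $x\to x+e_a$ at rate $\lambda\pi_w(a\mid x)$ and $x\to x-e_n$ at rate $\mu_n\mathbb{I}_{\{x_n\ge1\}}$ (equivalently its embedded jump chain $x[k]$, the state after the $k$-th transition). Softmax WSQ policy with weights $w\in\mathbb{R}^N_{>0}$ and temperature $\iota>0$: $\pi_w(a\mid x)=\exp(-w_a(2x_a+1)/\iota)/\sum_{b=1}^N\exp(-w_b(2x_b+1)/\iota)$. *)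

theory Defs
  imports "HOL-Probability.Probability"
begin

fun nstep :: "('s \<Rightarrow> 's pmf) \<Rightarrow> nat \<Rightarrow> 's \<Rightarrow> 's pmf" where
  "nstep K 0 x = return_pmf x"
| "nstep K (Suc n) x = bind_pmf (nstep K n x) K"

text \<open>First-passage probabilities: fpass K n x y = P_x(first visit to y at time n+1).\<close>
fun fpass :: "('s \<Rightarrow> 's pmf) \<Rightarrow> nat \<Rightarrow> 's \<Rightarrow> 's \<Rightarrow> real" where
  "fpass K 0 x y = pmf (K x) y"
| "fpass K (Suc n) x y =
     measure_pmf.expectation (K x) (\<lambda>z. if z = y then 0 else fpass K n z y)"

text \<open>P_x(tau_y < infinity), with tau_y = inf {n >= 1. X_n = y}.\<close>
definition hit_prob :: "('s \<Rightarrow> 's pmf) \<Rightarrow> 's \<Rightarrow> 's \<Rightarrow> real" where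
  "hit_prob K x y = (\<Sum>n. fpass K n x y)"

definition mc_irreducible :: "('s \<Rightarrow> 's pmf) \<Rightarrow> bool" where
  "mc_irreducible K \<longleftrightarrow> (\<forall>x y. \<exists>n. pmf (nstep K n x) y > 0)"

definition mc_stationary :: "('s \<Rightarrow> 's pmf) \<Rightarrow> 's pmf \<Rightarrow> bool" where
  "mc_stationary K p \<longleftrightarrow> bind_pmf p K = p"

definition mc_ergodic :: "('s \<Rightarrow> 's pmf) \<Rightarrow> bool" where
  "mc_ergodic K \<longleftrightarrow> (\<exists>p. mc_stationary K p \<and> (\<forall>q. mc_stationary K q \<longrightarrow> q = p) \<and>
      (\<forall>x y. (\<lambda>n. (\<Sum>k<n. pmf (nstep K k x) y) / real n) \<longlonglongrightarrow> pmf p y))"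

text \<open>Harris recurrence on a countable space (irreducibility measure = counting
  measure): irreducible and every state is reached with probability one from
  every initial state.\<close>
definition mc_harris_recurrent :: "('s \<Rightarrow> 's pmf) \<Rightarrow> bool" where
  "mc_harris_recurrent K \<longleftrightarrow> mc_irreducible K \<and> (\<forall>x y. hit_prob K x y = 1)"

definition mc_positive_harris :: "('s \<Rightarrow> 's pmf) \<Rightarrow> bool" where
  "mc_positive_harris K \<longleftrightarrow> mc_harris_recurrent K \<and> (\<exists>p. mc_stationary K p)"

text \<open>Servers are indexed by a finite type 'n (N = CARD('n)); states are
  queue-length vectors 'n => nat.\<close>

definition softmax_wsq ::
  "('n::finite \<Rightarrow> real) \<Rightarrow> real \<Rightarrow> ('n \<Rightarrow> nat) \<Rightarrow> 'n \<Rightarrow> real" where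
  "softmax_wsq w \<iota> x a =
     exp (- w a * (2 * real (x a) + 1) / \<iota>) /
     (\<Sum>b\<in>UNIV. exp (- w b * (2 * real (x b) + 1) / \<iota>))"

definition qs_rate ::
  "real \<Rightarrow> ('n::finite \<Rightarrow> real) \<Rightarrow> ('n \<Rightarrow> real) \<Rightarrow> real \<Rightarrow> ('n \<Rightarrow> nat) \<Rightarrow> ('n \<Rightarrow> nat) \<Rightarrow> real" where
  "qs_rate lam mu w \<iota> x y =
     (\<Sum>a\<in>UNIV. if y = x(a := x a + 1) then lam * softmax_wsq w \<iota> x a else 0)
   + (\<Sum>n\<in>UNIV. if 1 \<le> x n \<and> y = x(n := x n - 1) then mu n else 0)"

definition qs_total_rate ::
  "real \<Rightarrow> ('n::finite \<Rightarrow> real) \<Rightarrow> ('n \<Rightarrow> nat) \<Rightarrow> real" where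
  "qs_total_rate lam mu x = lam + (\<Sum>n\<in>UNIV. if 1 \<le> x n then mu n else 0)"

text \<open>Embedded jump chain x[k] of the queue-length process.\<close>
definition qs_jump_kernel ::
  "real \<Rightarrow> ('n::finite \<Rightarrow> real) \<Rightarrow> ('n \<Rightarrow> real) \<Rightarrow> real \<Rightarrow> ('n \<Rightarrow> nat) \<Rightarrow> ('n \<Rightarrow> nat) pmf" where
  "qs_jump_kernel lam mu w \<iota> x =
     embed_pmf (\<lambda>y. qs_rate lam mu w \<iota> x y / qs_total_rate lam mu x)"

end

theory Submission
  imports Defs
begin

text \<open>A Foster--Lyapunov argument. For a kernel with finite supports, a function \<open>V \<ge> 0\<close> with
  \<open>E\<^sub>x V(X\<^sub>1) \<le> V x - f x + b\<close> and finite sublevel sets of \<open>f\<close> forces the chain to return to the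
  finite set \<open>{f < b + 1}\<close> almost surely; combined with irreducibility this gives recurrence
  of every state. The last-exit decomposition turns the Cesaro averages of \<open>P\<^sup>n(x, y)\<close> into
  the reciprocal of the mean return time to \<open>y\<close>; the drift makes these limits tight, so they form
  a probability distribution, which is then the unique stationary one.

  For the queueing chain take \<open>V x = \<Sum>\<^sub>a w\<^sub>a x\<^sub>a\<^sup>2\<close>. Softmax routing costs at most \<open>N\<iota>\<close> more
  than joining any fixed queue, hence at most \<open>\<lambda>/\<Sum>\<mu>\<close> times the expected decrease from service,
  up to constants; so \<open>\<lambda> < \<Sum>\<mu>\<close> yields a drift \<open>f\<close> proportional to \<open>\<Sum>\<^sub>n \<mu>\<^sub>n w\<^sub>n x\<^sub>n\<close>, for every
  temperature.\<close>

section \<open>Markov chains with finitely supported kernels\<close>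

lemma nstep_Suc_left: "nstep K (Suc n) x = K x \<bind> nstep K n"
proof (induction n arbitrary: x)
  case 0
  show ?case by (simp add: bind_return_pmf bind_return_pmf')
next
  case (Suc n)
  have "nstep K (Suc (Suc n)) x = nstep K (Suc n) x \<bind> K" by simp
  also have "\<dots> = (K x \<bind> nstep K n) \<bind> K" by (simp only: Suc)
  also have "\<dots> = K x \<bind> (\<lambda>z. nstep K n z \<bind> K)" by (simp only: bind_assoc_pmf)
  finally show ?case by (simp only: nstep.simps)
qed

lemma pmf_nstep_0: "pmf (nstep K 0 x) y = (if x = y then 1 else 0)"
  by (simp add: pmf_return)

lemma bind_nstep_stationary:
  assumes "mc_stationary K q"
  shows "q \<bind> nstep K n = q"
proof (induction n)
  case 0
  show ?case by (simp add: bind_return_pmf')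
next
  case (Suc n)
  have "nstep K (Suc n) = (\<lambda>x. nstep K n x \<bind> K)" by auto
  then have "q \<bind> nstep K (Suc n) = (q \<bind> nstep K n) \<bind> K"
    by (simp only: bind_assoc_pmf)
  also have "\<dots> = q" using Suc assms by (simp only: mc_stationary_def)
  finally show ?case .
qed

lemma cesaro_tendsto_0:
  fixes a :: "nat \<Rightarrow> real"
  assumes "a \<longlonglongrightarrow> 0"
  shows "(\<lambda>N. (\<Sum>n<N. a n) / real N) \<longlonglongrightarrow> 0"
proof -
  have abs_mean: "(\<lambda>N. (\<Sum>n<N. \<bar>a n\<bar>) / real N) \<longlonglongrightarrow> 0"
  proof (rule order_tendstoI)
    fix e :: real assume "e < 0"
    then show "\<forall>\<^sub>F N in sequentially. e < (\<Sum>n<N. \<bar>a n\<bar>) / real N"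
      by (intro always_eventually allI less_le_trans[OF _ divide_nonneg_nonneg]) auto
  next
    fix e :: real assume e: "0 < e"
    have "(\<lambda>n. \<bar>a n\<bar>) \<longlonglongrightarrow> 0"
      using assms by (simp add: tendsto_rabs_zero_iff)
    then have "\<forall>\<^sub>F n in sequentially. \<bar>a n\<bar> < e / 2"
      using e by (intro order_tendstoD) auto
    then obtain N0 where N0: "\<And>n. n \<ge> N0 \<Longrightarrow> \<bar>a n\<bar> < e / 2"
      by (auto simp: eventually_sequentially)
    define S0 where "S0 = (\<Sum>n<N0. \<bar>a n\<bar>)"
    have "(\<lambda>N. S0 / real N) \<longlonglongrightarrow> 0"
      by (intro tendsto_divide_0[OF tendsto_const] filterlim_at_top_imp_at_infinity
          filterlim_real_sequentially)
    then have "\<forall>\<^sub>F N in sequentially. S0 / real N < e / 2"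
      using e by (intro order_tendstoD) auto
    moreover have "\<forall>\<^sub>F N in sequentially. N0 \<le> N \<and> 0 < N"
      by (auto simp: eventually_sequentially intro: exI[of _ "Suc N0"])
    ultimately show "\<forall>\<^sub>F N in sequentially. (\<Sum>n<N. \<bar>a n\<bar>) / real N < e"
    proof eventually_elim
      case (elim N)
      have "(\<Sum>n<N. \<bar>a n\<bar>) = S0 + (\<Sum>n\<in>{N0..<N}. \<bar>a n\<bar>)"
        unfolding S0_def using elim by (simp add: lessThan_atLeast0 sum.atLeastLessThan_concat)
      also have "(\<Sum>n\<in>{N0..<N}. \<bar>a n\<bar>) \<le> of_nat (card {N0..<N}) * (e / 2)"
        by (rule sum_bounded_above) (meson N0 atLeastLessThan_iff less_imp_le)
      also have "\<dots> \<le> real N * (e / 2)"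
        using e by (intro mult_right_mono) auto
      finally have "(\<Sum>n<N. \<bar>a n\<bar>) / real N \<le> S0 / real N + e / 2"
        using elim by (simp add: field_simps)
      then show ?case using elim by linarith
    qed
  qed
  have "\<bar>(\<Sum>n<N. a n) / real N\<bar> \<le> (\<Sum>n<N. \<bar>a n\<bar>) / real N" for N
    unfolding abs_divide abs_of_nat by (intro divide_right_mono sum_abs) simp
  then have "(\<lambda>N. \<bar>(\<Sum>n<N. a n) / real N\<bar>) \<longlonglongrightarrow> 0"
    by (intro tendsto_sandwich[OF _ _ tendsto_const abs_mean]) auto
  then show ?thesis
    by (simp only: tendsto_rabs_zero_iff)
qed

lemma sum_convolution_lessThan:
  fixes a c :: "nat \<Rightarrow> real"
  shows "(\<Sum>n<N. \<Sum>k\<le>n. a k * c (n - k)) = (\<Sum>k<N. a k * (\<Sum>j<N - k. c j))"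
proof (induction N)
  case (Suc N)
  have "(\<Sum>k<Suc N. a k * (\<Sum>j<Suc N - k. c j)) =
        (\<Sum>k<Suc N. a k * (\<Sum>j<N - k. c j) + a k * c (N - k))"
    by (rule sum.cong) (auto simp: Suc_diff_le distrib_left)
  also have "\<dots> = (\<Sum>k<Suc N. a k * (\<Sum>j<N - k. c j)) + (\<Sum>k<Suc N. a k * c (N - k))"
    by (rule sum.distrib)
  also have "(\<Sum>k<Suc N. a k * (\<Sum>j<N - k. c j)) = (\<Sum>k<N. a k * (\<Sum>j<N - k. c j))"
    by simp
  also have "(\<Sum>k<Suc N. a k * c (N - k)) = (\<Sum>k\<le>N. a k * c (N - k))"
    by (simp only: lessThan_Suc_atMost)
  finally show ?case using Suc by simp
qed simp

locale finite_support_kernel =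
  fixes K :: "'s \<Rightarrow> 's pmf"
  assumes finite_support: "finite (set_pmf (K x))"
begin

definition expect :: "'s \<Rightarrow> ('s \<Rightarrow> real) \<Rightarrow> real" where
  "expect x g = (\<Sum>z\<in>set_pmf (K x). pmf (K x) z * g z)"

lemma expect_cong: "(\<And>z. z \<in> set_pmf (K x) \<Longrightarrow> g z = h z) \<Longrightarrow> expect x g = expect x h"
  unfolding expect_def by (auto intro!: sum.cong)

lemma expect_mono: "(\<And>z. z \<in> set_pmf (K x) \<Longrightarrow> g z \<le> h z) \<Longrightarrow> expect x g \<le> expect x h"
  unfolding expect_def by (auto intro!: sum_mono mult_left_mono)

lemma expect_nonneg: "(\<And>z. z \<in> set_pmf (K x) \<Longrightarrow> 0 \<le> g z) \<Longrightarrow> 0 \<le> expect x g"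
  unfolding expect_def by (auto intro!: sum_nonneg)

lemma expect_add: "expect x (\<lambda>z. g z + h z) = expect x g + expect x h"
  unfolding expect_def by (simp add: distrib_left sum.distrib)

lemma expect_diff: "expect x (\<lambda>z. g z - h z) = expect x g - expect x h"
  unfolding expect_def by (simp add: right_diff_distrib sum_subtractf)

lemma expect_cmult: "expect x (\<lambda>z. c * g z) = c * expect x g"
  unfolding expect_def by (simp add: sum_distrib_left algebra_simps)

lemma expect_const: "expect x (\<lambda>z. c) = c"
  unfolding expect_def by (simp add: sum_distrib_right[symmetric] sum_pmf_eq_1 finite_support)

lemma expect_sum: "expect x (\<lambda>z. \<Sum>i\<in>I. g i z) = (\<Sum>i\<in>I. expect x (g i))"
  unfolding expect_def by (simp add: sum_distrib_left sum.swap[of _ I])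

lemma expect_indicator: "expect x (\<lambda>z. if z = y then 1 else 0) = pmf (K x) y"
  unfolding expect_def using finite_support[of x]
  by (auto simp: set_pmf_iff if_distrib cong: if_cong)

lemma pmf_mult_le_expect:
  "(\<And>z. z \<in> set_pmf (K x) \<Longrightarrow> 0 \<le> g z) \<Longrightarrow> z \<in> set_pmf (K x) \<Longrightarrow> pmf (K x) z * g z \<le> expect x g"
  unfolding expect_def by (rule member_le_sum) (auto simp: finite_support)

lemma expectation_eq_expect: "measure_pmf.expectation (K x) g = expect x g"
  unfolding expect_def
  by (subst integral_measure_pmf_real[OF finite_support]) (auto simp: mult.commute)

lemma tendsto_expect:
  "(\<And>z. (\<lambda>n. g n z) \<longlonglongrightarrow> h z) \<Longrightarrow> (\<lambda>n. expect x (g n)) \<longlonglongrightarrow> expect x h"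
  unfolding expect_def by (intro tendsto_sum tendsto_mult_left)

lemma pmf_nstep_Suc: "pmf (nstep K (Suc n) x) y = expect x (\<lambda>z. pmf (nstep K n z) y)"
  by (simp only: nstep_Suc_left pmf_bind expectation_eq_expect)

lemma pmf_nstep_Suc_pos:
  assumes "0 < pmf (K x) z" and "0 < pmf (nstep K n z) y"
  shows "0 < pmf (nstep K (Suc n) x) y"
proof -
  have "z \<in> set_pmf (K x)" using assms(1) by (simp add: set_pmf_iff)
  then have "pmf (K x) z * pmf (nstep K n z) y \<le> pmf (nstep K (Suc n) x) y"
    unfolding pmf_nstep_Suc by (intro pmf_mult_le_expect) simp_all
  moreover have "0 < pmf (K x) z * pmf (nstep K n z) y" using assms by simp
  ultimately show ?thesis by linarith
qed

lemma irreducible_imp_pmf_nstep_Suc_pos: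
  assumes "mc_irreducible K"
  obtains n where "0 < pmf (nstep K (Suc n) x) y"
proof -
  obtain z where "z \<in> set_pmf (K x)" using set_pmf_not_empty[of "K x"] by blast
  moreover obtain n where "0 < pmf (nstep K n z) y"
    using assms unfolding mc_irreducible_def by blast
  ultimately have "0 < pmf (nstep K (Suc n) x) y"
    by (intro pmf_nstep_Suc_pos) (simp_all add: pmf_positive)
  then show thesis by (rule that)
qed

primrec iter_expect :: "nat \<Rightarrow> ('s \<Rightarrow> real) \<Rightarrow> 's \<Rightarrow> real" where
  "iter_expect 0 g x = g x"
| "iter_expect (Suc n) g x = expect x (iter_expect n g)"

lemma iter_expect_mono: "(\<And>z. g z \<le> h z) \<Longrightarrow> iter_expect n g x \<le> iter_expect n h x"
  by (induction n arbitrary: x) (auto intro!: expect_mono)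

lemma iter_expect_nonneg: "(\<And>z. 0 \<le> g z) \<Longrightarrow> 0 \<le> iter_expect n g x"
  by (induction n arbitrary: x) (auto intro!: expect_nonneg)

lemma iter_expect_add: "iter_expect n (\<lambda>z. g z + h z) x = iter_expect n g x + iter_expect n h x"
  by (induction n arbitrary: x) (simp_all add: expect_add[symmetric] cong: expect_cong)

lemma iter_expect_diff: "iter_expect n (\<lambda>z. g z - h z) x = iter_expect n g x - iter_expect n h x"
  by (induction n arbitrary: x) (simp_all add: expect_diff[symmetric] cong: expect_cong)

lemma iter_expect_cmult: "iter_expect n (\<lambda>z. c * g z) x = c * iter_expect n g x"
  by (induction n arbitrary: x) (simp_all add: expect_cmult[symmetric] cong: expect_cong)

lemma iter_expect_const: "iter_expect n (\<lambda>z. c) x = c"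
  by (induction n arbitrary: x) (simp_all add: expect_const cong: expect_cong)

lemma iter_expect_sum: "iter_expect n (\<lambda>z. \<Sum>i\<in>I. g i z) x = (\<Sum>i\<in>I. iter_expect n (g i) x)"
  by (induction n arbitrary: x) (simp_all add: expect_sum[symmetric] cong: expect_cong)

lemma iter_expect_Suc_right: "iter_expect (Suc n) g x = iter_expect n (\<lambda>z. expect z g) x"
  by (induction n arbitrary: x) (simp_all cong: expect_cong)

lemma iter_expect_indicator: "iter_expect n (\<lambda>z. if z = y then 1 else 0) x = pmf (nstep K n x) y"
  by (induction n arbitrary: x) (simp_all add: pmf_nstep_0 pmf_nstep_Suc del: nstep.simps cong: expect_cong)

lemma iter_expect_indicator_set:
  "finite F \<Longrightarrow> (\<Sum>y\<in>F. pmf (nstep K n x) y) = iter_expect n (\<lambda>z. if z \<in> F then 1 else 0) x"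
  by (simp add: iter_expect_indicator[symmetric] iter_expect_sum[symmetric] sum.delta')

text \<open>\<open>taboo A g n x\<close> is \<open>E\<^sub>x[g(X\<^sub>n); X\<^sub>1,\<dots>,X\<^sub>n \<notin> A]\<close>.\<close>

primrec taboo :: "'s set \<Rightarrow> ('s \<Rightarrow> real) \<Rightarrow> nat \<Rightarrow> 's \<Rightarrow> real" where
  "taboo A g 0 x = g x"
| "taboo A g (Suc n) x = expect x (\<lambda>z. if z \<in> A then 0 else taboo A g n z)"

lemma taboo_Suc_mult: "taboo A g (Suc n) x = expect x (\<lambda>z. (if z \<in> A then 0 else 1) * taboo A g n z)"
  by (auto intro!: expect_cong)

lemma taboo_nonneg: "(\<And>z. 0 \<le> g z) \<Longrightarrow> 0 \<le> taboo A g n x"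
  by (induction n arbitrary: x) (auto intro!: expect_nonneg)

lemma taboo_one_le_1: "taboo A (\<lambda>_. 1) n x \<le> 1"
proof (induction n arbitrary: x)
  case (Suc n)
  have "taboo A (\<lambda>_. 1) (Suc n) x \<le> expect x (\<lambda>z. 1)"
    using Suc by (auto intro!: expect_mono)
  then show ?case by (simp add: expect_const)
qed simp

lemma taboo_one_Suc_le: "taboo A (\<lambda>_. 1) (Suc n) x \<le> taboo A (\<lambda>_. 1) n x"
proof (induction n arbitrary: x)
  case 0
  show ?case using taboo_one_le_1[of A "Suc 0" x] by simp
next
  case (Suc n)
  show ?case unfolding taboo.simps(2)[of A _ "Suc n"] taboo.simps(2)[of A _ n]
    using Suc by (auto intro!: expect_mono)
qed

lemma sum_fpass_add_taboo: "(\<Sum>k<n. fpass K k x y) + taboo {y} (\<lambda>_. 1) n x = 1"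
proof (induction n arbitrary: x)
  case (Suc n)
  have "(\<Sum>k<Suc n. fpass K k x y) = pmf (K x) y + (\<Sum>k<n. fpass K (Suc k) x y)"
    by (simp only: sum.lessThan_Suc_shift fpass.simps(1))
  also have "(\<Sum>k<n. fpass K (Suc k) x y) = expect x (\<lambda>z. \<Sum>k<n. if z = y then 0 else fpass K k z y)"
    by (simp add: expectation_eq_expect expect_sum)
  also have "\<dots> = expect x (\<lambda>z. if z = y then 0 else 1 - taboo {y} (\<lambda>_. 1) n z)"
    using Suc by (intro expect_cong) (auto simp: algebra_simps)
  finally have "(\<Sum>k<Suc n. fpass K k x y) + taboo {y} (\<lambda>_. 1) (Suc n) x =
     expect x (\<lambda>z. if z = y then 1 else 0) + expect x (\<lambda>z. if z = y then 0 else 1 - taboo {y} (\<lambda>_. 1) n z)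
     + expect x (\<lambda>z. if z \<in> {y} then 0 else taboo {y} (\<lambda>_. 1) n z)"
    by (simp add: expect_indicator)
  also have "\<dots> = expect x (\<lambda>z. 1)"
    unfolding expect_add[symmetric] by (intro expect_cong) auto
  finally show ?case by (simp add: expect_const)
qed simp

text \<open>\<open>surv y n x = P\<^sub>x(X\<^sub>1,\<dots>,X\<^sub>n \<noteq> y)\<close> and \<open>avoid y n x = P\<^sub>x(X\<^sub>0,\<dots>,X\<^sub>n \<noteq> y)\<close>.\<close>

abbreviation surv :: "'s \<Rightarrow> nat \<Rightarrow> 's \<Rightarrow> real" where
  "surv y n x \<equiv> taboo {y} (\<lambda>_. 1) n x"

definition avoid :: "'s \<Rightarrow> nat \<Rightarrow> 's \<Rightarrow> real" where
  "avoid y n x = (if x = y then 0 else surv y n x)"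

lemma surv_Suc: "surv y (Suc n) x = expect x (avoid y n)"
  unfolding avoid_def by (auto intro!: expect_cong)

lemma surv_nonneg: "0 \<le> surv y n x"
  by (rule taboo_nonneg) simp

lemma avoid_nonneg: "0 \<le> avoid y n x"
  by (simp add: avoid_def surv_nonneg)

lemma avoid_le_1: "avoid y n x \<le> 1"
  by (simp add: avoid_def taboo_one_le_1)

lemma last_exit_decomposition:
  "(\<Sum>k\<le>n. pmf (nstep K k x) y * surv y (n - k) y) + avoid y n x = 1"
proof (induction n arbitrary: x)
  case 0
  then show ?case by (simp add: pmf_nstep_0 avoid_def)
next
  case (Suc n)
  have "(\<Sum>k\<le>Suc n. pmf (nstep K k x) y * surv y (Suc n - k) y) =
     pmf (nstep K 0 x) y * surv y (Suc n) y + (\<Sum>k\<le>n. pmf (nstep K (Suc k) x) y * surv y (n - k) y)"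
    by (subst sum.atMost_Suc_shift) simp
  also have "(\<Sum>k\<le>n. pmf (nstep K (Suc k) x) y * surv y (n - k) y) =
      expect x (\<lambda>z. \<Sum>k\<le>n. pmf (nstep K k z) y * surv y (n - k) y)"
    by (simp only: pmf_nstep_Suc expect_cmult mult.commute[of _ "surv y _ y"] expect_sum)
  also have "\<dots> = expect x (\<lambda>z. 1 - avoid y n z)"
    using Suc by (intro expect_cong) (auto simp: algebra_simps)
  also have "\<dots> = 1 - expect x (avoid y n)"
    by (simp add: expect_diff expect_const)
  finally show ?case
    by (simp add: pmf_nstep_0 avoid_def surv_Suc del: nstep.simps taboo.simps(2))
qed

lemma avoid_le_1_minus_pmf: "avoid y n z \<le> 1 - pmf (nstep K n z) y"
proof -
  have "pmf (nstep K n z) y * surv y (n - n) y \<le> (\<Sum>k\<le>n. pmf (nstep K k z) y * surv y (n - k) y)"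
    by (rule member_le_sum) (auto intro!: mult_nonneg_nonneg surv_nonneg)
  then show ?thesis using last_exit_decomposition[where n=n and x=z and y=y] by simp
qed

lemma surv_Suc_le_1_minus_pmf: "surv y (Suc n) x \<le> 1 - pmf (nstep K (Suc n) x) y"
proof -
  have "surv y (Suc n) x \<le> expect x (\<lambda>z. 1 - pmf (nstep K n z) y)"
    unfolding surv_Suc by (intro expect_mono avoid_le_1_minus_pmf)
  then show ?thesis by (simp add: expect_diff expect_const pmf_nstep_Suc del: nstep.simps)
qed

end

section \<open>The Foster--Lyapunov criterion\<close>

locale foster_lyapunov = finite_support_kernel K for K :: "'s \<Rightarrow> 's pmf" +
  fixes V f :: "'s \<Rightarrow> real" and b :: real
  assumes V_nonneg: "0 \<le> V x"
    and f_nonneg: "0 \<le> f x"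
    and drift: "expect x V \<le> V x - f x + b"
    and finite_sublevel: "finite {x. f x \<le> L}"
    and irreducible: "mc_irreducible K"
    and finite_predecessors: "finite {z. y \<in> set_pmf (K z)}"
begin

definition small_set :: "'s set" where
  "small_set = {x. f x < b + 1}"

lemma finite_small_set: "finite small_set"
  unfolding small_set_def by (rule finite_subset[OF _ finite_sublevel[of "b + 1"]]) auto

text \<open>Outside \<open>small_set\<close> the drift decreases \<open>V\<close> by at least \<open>1\<close>, so \<open>V\<close> killed on entering
  \<open>small_set\<close> loses at least the probability of not yet having entered it.\<close>

lemma taboo_lyapunov_Suc_le:
  "taboo small_set V (Suc (Suc n)) x \<le> taboo small_set V (Suc n) x - taboo small_set (\<lambda>_. 1) (Suc n) x"
proof (induction n arbitrary: x)
  case 0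
  have outside: "taboo small_set V (Suc 0) z \<le> V z - 1" if "z \<notin> small_set" for z
  proof -
    have "taboo small_set V (Suc 0) z \<le> expect z V"
      by (auto intro!: expect_mono simp: V_nonneg)
    also have "\<dots> \<le> V z - f z + b" by (rule drift)
    finally show ?thesis using that by (auto simp: small_set_def)
  qed
  have "taboo small_set V (Suc (Suc 0)) x \<le> expect x (\<lambda>z. (if z \<in> small_set then 0 else V z)
      - (if z \<in> small_set then 0 else 1))"
    unfolding taboo.simps(2)[of small_set V "Suc 0"] using outside by (auto intro!: expect_mono)
  also have "\<dots> = taboo small_set V (Suc 0) x - taboo small_set (\<lambda>_. 1) (Suc 0) x"
    unfolding taboo.simps by (simp add: expect_diff)
  finally show ?case .
next
  case (Suc n)
  have "taboo small_set V (Suc (Suc (Suc n))) x \<le>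
      expect x (\<lambda>z. (if z \<in> small_set then 0 else taboo small_set V (Suc n) z)
        - (if z \<in> small_set then 0 else taboo small_set (\<lambda>_. 1) (Suc n) z))"
    unfolding taboo.simps(2)[of small_set V "Suc (Suc n)"] using Suc by (auto intro!: expect_mono)
  then show ?case by (simp add: expect_diff)
qed

lemma taboo_small_set_tendsto_0: "(\<lambda>n. taboo small_set (\<lambda>_. 1) n x) \<longlonglongrightarrow> 0"
proof -
  have telescope: "(\<Sum>k<n. taboo small_set (\<lambda>_. 1) (Suc k) x)
      \<le> taboo small_set V (Suc 0) x - taboo small_set V (Suc n) x" for n
  proof (induction n)
    case (Suc n)
    then show ?case using taboo_lyapunov_Suc_le[of n x] by simp
  qed simp
  have "summable (\<lambda>k. taboo small_set (\<lambda>_. 1) (Suc k) x)"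
  proof (rule summableI_nonneg_bounded)
    fix n
    show "(\<Sum>k<n. taboo small_set (\<lambda>_. 1) (Suc k) x) \<le> taboo small_set V (Suc 0) x"
      using telescope[of n] taboo_nonneg[of V small_set "Suc n" x] V_nonneg by simp
  qed (rule taboo_nonneg, simp)
  then have "(\<lambda>k. taboo small_set (\<lambda>_. 1) (Suc k) x) \<longlonglongrightarrow> 0"
    by (rule summable_LIMSEQ_zero)
  then show ?thesis by (rule LIMSEQ_imp_Suc)
qed

definition never_visit :: "'s \<Rightarrow> 's \<Rightarrow> real" where
  "never_visit y x = lim (\<lambda>n. surv y n x)"

lemma surv_tendsto_never_visit: "(\<lambda>n. surv y n x) \<longlonglongrightarrow> never_visit y x"
  and never_visit_le_surv: "never_visit y x \<le> surv y n x"
proof -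
  have "decseq (\<lambda>n. surv y n x)"
    by (rule decseq_SucI) (rule taboo_one_Suc_le)
  then obtain L where L: "(\<lambda>n. surv y n x) \<longlonglongrightarrow> L" "\<forall>i. L \<le> surv y i x"
    using decseq_convergent[of "\<lambda>n. surv y n x" 0] surv_nonneg by blast
  then have "never_visit y x = L" unfolding never_visit_def using limI by blast
  then show "(\<lambda>n. surv y n x) \<longlonglongrightarrow> never_visit y x" "never_visit y x \<le> surv y n x"
    using L by auto
qed

lemma never_visit_nonneg: "0 \<le> never_visit y x"
  by (rule LIMSEQ_le_const[OF surv_tendsto_never_visit]) (auto intro: surv_nonneg)

lemma never_visit_le_1: "never_visit y x \<le> 1"
  using never_visit_le_surv[of y x 0] by simp

lemma never_visit_eq: "never_visit y x = expect x (\<lambda>z. (if z = y then 0 else 1) * never_visit y z)"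
proof -
  have "(\<lambda>n. surv y (Suc n) x) \<longlonglongrightarrow> never_visit y x"
    by (rule LIMSEQ_Suc[OF surv_tendsto_never_visit])
  moreover have "(\<lambda>n. surv y (Suc n) x) \<longlonglongrightarrow> expect x (\<lambda>z. (if z = y then 0 else 1) * never_visit y z)"
    unfolding taboo_Suc_mult by (simp add: tendsto_expect tendsto_mult_left surv_tendsto_never_visit)
  ultimately show ?thesis using LIMSEQ_unique by blast
qed

definition never_visit_max :: "'s \<Rightarrow> real" where
  "never_visit_max y = (if small_set = {} then 0 else Max (never_visit y ` small_set))"

lemma never_visit_le_max_on_small_set: "z \<in> small_set \<Longrightarrow> never_visit y z \<le> never_visit_max y"
  unfolding never_visit_max_def using finite_small_set by auto

lemma never_visit_max_nonneg: "0 \<le> never_visit_max y"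
  unfolding never_visit_max_def using finite_small_set never_visit_nonneg by (auto simp: Max_ge_iff)

lemma never_visit_le_before_small_set:
  "never_visit y x \<le> never_visit_max y * (1 - taboo small_set (\<lambda>_. 1) n x) + taboo small_set (\<lambda>_. 1) n x"
proof (induction n arbitrary: x)
  case 0
  then show ?case using never_visit_le_1 by simp
next
  case (Suc n)
  let ?M = "never_visit_max y" and ?t = "\<lambda>z. (if z \<in> small_set then 0 else 1) * taboo small_set (\<lambda>_. 1) n z"
  have "never_visit y x \<le> expect x (never_visit y)"
    by (subst never_visit_eq) (auto intro!: expect_mono simp: never_visit_nonneg)
  also have "\<dots> \<le> expect x (\<lambda>z. ?M - ?M * ?t z + ?t z)"
    using Suc never_visit_le_max_on_small_set by (intro expect_mono) (auto simp: algebra_simps)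
  also have "\<dots> = ?M * (1 - taboo small_set (\<lambda>_. 1) (Suc n) x) + taboo small_set (\<lambda>_. 1) (Suc n) x"
    by (simp only: expect_add expect_diff expect_cmult expect_const taboo_Suc_mult[symmetric])
       (simp add: algebra_simps)
  finally show ?case .
qed

lemma never_visit_le_max: "never_visit y x \<le> never_visit_max y"
proof -
  have "(\<lambda>n. never_visit_max y * (1 - taboo small_set (\<lambda>_. 1) n x) + taboo small_set (\<lambda>_. 1) n x)
      \<longlonglongrightarrow> never_visit_max y * (1 - 0) + 0"
    by (intro tendsto_intros taboo_small_set_tendsto_0)
  then show ?thesis
    by (intro LIMSEQ_le_const) (auto intro: never_visit_le_before_small_set)
qed

lemma never_visit_le_max_mult_surv: "never_visit y x \<le> never_visit_max y * surv y n x"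
proof (induction n arbitrary: x)
  case 0
  then show ?case using never_visit_le_max by simp
next
  case (Suc n)
  have "never_visit y x = expect x (\<lambda>z. (if z = y then 0 else 1) * never_visit y z)"
    by (rule never_visit_eq)
  also have "\<dots> \<le> expect x (\<lambda>z. never_visit_max y * ((if z = y then 0 else 1) * surv y n z))"
    using Suc by (intro expect_mono) auto
  also have "\<dots> = never_visit_max y * surv y (Suc n) x"
    by (simp only: expect_cmult taboo_Suc_mult) simp
  finally show ?case .
qed

text \<open>The maximum is attained at some \<open>z\<^sub>0\<close> in the small set; by irreducibility \<open>z\<^sub>0\<close> reaches \<open>y\<close>
  with positive probability, so \<open>surv y n z\<^sub>0 < 1\<close> for some \<open>n\<close>, which is compatible with
  \<open>never_visit_le_max_mult_surv\<close> only if the maximum vanishes.\<close>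

lemma never_visit_max_eq_0: "never_visit_max y = 0"
proof (cases "small_set = {}")
  case True
  then show ?thesis by (simp add: never_visit_max_def)
next
  case False
  then have "never_visit_max y \<in> never_visit y ` small_set"
    unfolding never_visit_max_def using finite_small_set by (auto intro!: Max_in)
  then obtain z0 where z0: "z0 \<in> small_set" "never_visit y z0 = never_visit_max y" by auto
  obtain n where n: "0 < pmf (nstep K (Suc n) z0) y"
    using irreducible_imp_pmf_nstep_Suc_pos[OF irreducible] by blast
  have "never_visit_max y \<le> never_visit_max y * surv y (Suc n) z0"
    using never_visit_le_max_mult_surv[of y z0 "Suc n"] z0 by simp
  also have "\<dots> \<le> never_visit_max y * (1 - pmf (nstep K (Suc n) z0) y)"
    by (intro mult_left_mono surv_Suc_le_1_minus_pmf never_visit_max_nonneg)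
  finally have "never_visit_max y * pmf (nstep K (Suc n) z0) y \<le> 0"
    by (simp add: algebra_simps)
  then show ?thesis using n never_visit_max_nonneg[of y] by (simp add: mult_le_0_iff antisym)
qed

lemma surv_tendsto_0: "(\<lambda>n. surv y n x) \<longlonglongrightarrow> 0"
proof -
  have "never_visit y x = 0"
    using never_visit_le_max[of y x] never_visit_max_eq_0[of y] never_visit_nonneg[of y x] by simp
  then show ?thesis using surv_tendsto_never_visit[of y x] by simp
qed

lemma hit_prob_eq_1: "hit_prob K x y = 1"
proof -
  have "(\<lambda>n. 1 - surv y n x) \<longlonglongrightarrow> 1 - 0"
    by (intro tendsto_intros surv_tendsto_0)
  moreover have "(\<Sum>k<n. fpass K k x y) = 1 - surv y n x" for n
    using sum_fpass_add_taboo[where n=n and x=x and y=y] by (simp add: algebra_simps)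
  ultimately have "(\<lambda>k. fpass K k x y) sums 1"
    unfolding sums_def by simp
  then show ?thesis unfolding hit_prob_def by (rule sums_unique[symmetric])
qed

text \<open>\<open>trunc_return y m = E\<^sub>y min(\<tau>\<^sub>y, m)\<close> for the return time \<open>\<tau>\<^sub>y\<close>, and \<open>freq y\<close> is the reciprocal
  of the mean return time (\<open>0\<close> if it is infinite).\<close>

definition trunc_return :: "'s \<Rightarrow> nat \<Rightarrow> real" where
  "trunc_return y m = (\<Sum>j<m. surv y j y)"

definition freq :: "'s \<Rightarrow> real" where
  "freq y = lim (\<lambda>m. 1 / trunc_return y (Suc m))"

abbreviation visits :: "'s \<Rightarrow> 's \<Rightarrow> nat \<Rightarrow> real" where
  "visits x y N \<equiv> (\<Sum>k<N. pmf (nstep K k x) y)"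

lemma trunc_return_mono: "m \<le> m' \<Longrightarrow> trunc_return y m \<le> trunc_return y m'"
  unfolding trunc_return_def by (rule sum_mono2) (auto intro: surv_nonneg)

lemma trunc_return_Suc_ge_1: "1 \<le> trunc_return y (Suc m)"
  using trunc_return_mono[of 1 "Suc m" y] by (simp add: trunc_return_def)

lemma freq_tendsto: "(\<lambda>m. 1 / trunc_return y (Suc m)) \<longlonglongrightarrow> freq y"
  and freq_le: "freq y \<le> 1 / trunc_return y (Suc m)"
proof -
  have "decseq (\<lambda>m. 1 / trunc_return y (Suc m))"
  proof (rule decseq_SucI)
    fix m
    show "1 / trunc_return y (Suc (Suc m)) \<le> 1 / trunc_return y (Suc m)"
      using trunc_return_Suc_ge_1[of y m] trunc_return_mono[of "Suc m" "Suc (Suc m)" y]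
      by (intro divide_left_mono) auto
  qed
  moreover have "\<forall>i. 0 \<le> 1 / trunc_return y (Suc i)"
    using trunc_return_Suc_ge_1 by (simp add: order.trans[OF zero_le_one])
  ultimately obtain L where L: "(\<lambda>m. 1 / trunc_return y (Suc m)) \<longlonglongrightarrow> L"
      "\<forall>i. L \<le> 1 / trunc_return y (Suc i)"
    using decseq_convergent[of "\<lambda>m. 1 / trunc_return y (Suc m)" 0] by blast
  then have "freq y = L" unfolding freq_def using limI by blast
  then show "(\<lambda>m. 1 / trunc_return y (Suc m)) \<longlonglongrightarrow> freq y" "freq y \<le> 1 / trunc_return y (Suc m)"
    using L by auto
qed

lemma freq_nonneg: "0 \<le> freq y"
proof -
  have "0 \<le> 1 / trunc_return y (Suc n)" for n
    using trunc_return_Suc_ge_1[of y n] by simp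
  then show ?thesis by (intro LIMSEQ_le_const[OF freq_tendsto]) auto
qed

lemma freq_le_1: "freq y \<le> 1"
  using freq_le[of y 0] by (simp add: trunc_return_def)

lemma renewal_identity:
  "(\<Sum>k<N. pmf (nstep K k x) y * trunc_return y (N - k)) = real N - (\<Sum>n<N. avoid y n x)"
proof -
  have "(\<Sum>k<N. pmf (nstep K k x) y * trunc_return y (N - k)) =
        (\<Sum>n<N. \<Sum>k\<le>n. pmf (nstep K k x) y * surv y (n - k) y)"
    unfolding trunc_return_def by (rule sum_convolution_lessThan[symmetric])
  also have "\<dots> = (\<Sum>n<N. 1 - avoid y n x)"
    using last_exit_decomposition by (intro sum.cong) (auto simp: algebra_simps)
  finally show ?thesis by (simp add: sum_subtractf)
qed

lemma visits_lower_bound: "real N - (\<Sum>n<N. avoid y n x) \<le> trunc_return y N * visits x y N"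
proof -
  have "(\<Sum>k<N. pmf (nstep K k x) y * trunc_return y (N - k)) \<le> (\<Sum>k<N. pmf (nstep K k x) y * trunc_return y N)"
    by (intro sum_mono mult_left_mono trunc_return_mono) auto
  then show ?thesis unfolding renewal_identity by (simp add: sum_distrib_left mult.commute)
qed

lemma visits_upper_bound: "m \<le> N \<Longrightarrow> trunc_return y m * visits x y (N - m) \<le> real N"
proof -
  assume mN: "m \<le> N"
  have "trunc_return y m * visits x y (N - m) = (\<Sum>k<N - m. pmf (nstep K k x) y * trunc_return y m)"
    by (simp add: sum_distrib_left mult.commute)
  also have "\<dots> \<le> (\<Sum>k<N - m. pmf (nstep K k x) y * trunc_return y (N - k))"
    by (intro sum_mono mult_left_mono trunc_return_mono) auto
  also have "\<dots> \<le> (\<Sum>k<N. pmf (nstep K k x) y * trunc_return y (N - k))"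
    by (rule sum_mono2) (auto simp: trunc_return_def surv_nonneg sum_nonneg)
  also have "\<dots> \<le> real N"
    unfolding renewal_identity by (simp add: sum_nonneg avoid_nonneg)
  finally show ?thesis .
qed

lemma visits_le_shift: "m \<le> N \<Longrightarrow> visits x y N \<le> visits x y (N - m) + real m"
proof -
  assume mN: "m \<le> N"
  have "visits x y N = visits x y (N - m) + (\<Sum>k\<in>{N-m..<N}. pmf (nstep K k x) y)"
    using mN by (simp add: lessThan_atLeast0 sum.atLeastLessThan_concat)
  also have "(\<Sum>k\<in>{N-m..<N}. pmf (nstep K k x) y) \<le> of_nat (card {N-m..<N}) * 1"
    by (rule sum_bounded_above) (simp add: pmf_le_1)
  finally show ?thesis using mN by simp
qed

lemma visits_average_eventually_gt:
  assumes "a < freq y"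
  shows "\<forall>\<^sub>F N in sequentially. a < visits x y N / real N"
proof -
  have "(\<lambda>n. avoid y n x) \<longlonglongrightarrow> 0"
    by (rule tendsto_sandwich[of "\<lambda>_. 0" _ _ "\<lambda>n. surv y n x"])
       (auto simp: avoid_def surv_nonneg intro: surv_tendsto_0)
  then have "(\<lambda>N. freq y - (\<Sum>n<N. avoid y n x) / real N) \<longlonglongrightarrow> freq y - 0"
    by (intro tendsto_intros cesaro_tendsto_0)
  then have "\<forall>\<^sub>F N in sequentially. a < freq y - (\<Sum>n<N. avoid y n x) / real N"
    using assms by (intro order_tendstoD) auto
  moreover have "\<forall>\<^sub>F N in sequentially. 0 < N"
    by (auto simp: eventually_sequentially intro: exI[of _ 1])
  ultimately show ?thesis
  proof eventually_elim
    case (elim N)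
    define r where "r = (\<Sum>n<N. avoid y n x) / real N"
    have r: "0 \<le> r" "r \<le> 1"
      using elim sum_bounded_above[of "{..<N}" "\<lambda>n. avoid y n x" 1]
      by (auto simp: r_def avoid_le_1 avoid_nonneg sum_nonneg divide_le_eq_1)
    obtain N' where N': "N = Suc N'" using elim by (cases N) auto
    have M: "1 \<le> trunc_return y N" using trunc_return_Suc_ge_1 N' by simp
    have "freq y - r \<le> freq y * (1 - r)"
      using mult_left_le_one_le[OF r(1) freq_nonneg freq_le_1] by (simp add: algebra_simps)
    also have "\<dots> \<le> 1 / trunc_return y N * (1 - r)"
      using freq_le[of y N'] N' r by (intro mult_right_mono) auto
    also have "\<dots> = (real N - r * real N) / (real N * trunc_return y N)"
      using elim M by (simp add: field_simps)
    also have "\<dots> \<le> (trunc_return y N * visits x y N) / (real N * trunc_return y N)"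
      using visits_lower_bound[of N y x] elim M by (intro divide_right_mono) (auto simp: r_def)
    also have "\<dots> = visits x y N / real N"
      using M by simp
    finally show ?case using elim by (simp add: r_def)
  qed
qed

lemma visits_average_eventually_lt:
  assumes "freq y < a"
  shows "\<forall>\<^sub>F N in sequentially. visits x y N / real N < a"
proof -
  have "\<forall>\<^sub>F m in sequentially. 1 / trunc_return y (Suc m) < (freq y + a) / 2"
    using assms by (intro order_tendstoD[OF freq_tendsto]) auto
  then obtain m0 where m0: "1 / trunc_return y (Suc m0) < (freq y + a) / 2"
    by (auto simp: eventually_sequentially)
  define m where "m = Suc m0"
  have M: "1 \<le> trunc_return y m"
    using trunc_return_Suc_ge_1 by (simp add: m_def)
  have "(\<lambda>N. 1 / trunc_return y m + real m / real N) \<longlonglongrightarrow> 1 / trunc_return y m + 0"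
    by (intro tendsto_intros tendsto_divide_0[OF tendsto_const]
        filterlim_at_top_imp_at_infinity[OF filterlim_real_sequentially])
  then have "\<forall>\<^sub>F N in sequentially. 1 / trunc_return y m + real m / real N < a"
    by (rule order_tendstoD(2)) (use assms m0 in \<open>simp add: m_def\<close>)
  moreover have "\<forall>\<^sub>F N in sequentially. m \<le> N \<and> 0 < N"
    by (auto simp: eventually_sequentially m_def intro: exI[of _ "Suc m0"])
  ultimately show ?thesis
  proof eventually_elim
    case (elim N)
    have "visits x y (N - m) \<le> real N / trunc_return y m"
      using visits_upper_bound[of m N y x] elim M by (simp add: field_simps)
    then have "visits x y N \<le> real N / trunc_return y m + real m"
      using visits_le_shift[of m N x y] elim by simp
    then have "visits x y N / real N \<le> 1 / trunc_return y m + real m / real N"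
      using elim by (simp add: field_simps)
    then show ?case using elim by simp
  qed
qed

lemma visits_average_tendsto: "(\<lambda>N. visits x y N / real N) \<longlonglongrightarrow> freq y"
  by (rule order_tendstoI) (simp_all add: visits_average_eventually_gt visits_average_eventually_lt)

lemma sum_iter_expect_penalty_le: "(\<Sum>k<N. iter_expect k f x) \<le> V x + real N * b"
proof -
  have step: "iter_expect (Suc n) V x \<le> iter_expect n V x - iter_expect n f x + b" for n
  proof -
    have "iter_expect (Suc n) V x = iter_expect n (\<lambda>z. expect z V) x"
      by (rule iter_expect_Suc_right)
    also have "\<dots> \<le> iter_expect n (\<lambda>z. V z - f z + b) x"
      by (intro iter_expect_mono drift)
    also have "\<dots> = iter_expect n V x - iter_expect n f x + b"
      by (simp add: iter_expect_add iter_expect_diff iter_expect_const)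
    finally show ?thesis .
  qed
  have "(\<Sum>k<N. iter_expect k f x) \<le> V x - iter_expect N V x + real N * b"
  proof (induction N)
    case (Suc N)
    then show ?case using step[of N] by (simp add: algebra_simps)
  qed simp
  moreover have "0 \<le> iter_expect N V x"
    by (intro iter_expect_nonneg V_nonneg)
  ultimately show ?thesis by linarith
qed

lemma mass_sublevel_ge: "0 < L \<Longrightarrow> 1 - iter_expect k f x / L \<le> (\<Sum>y\<in>{z. f z \<le> L}. pmf (nstep K k x) y)"
proof -
  assume L: "0 < L"
  have "1 - (\<Sum>y\<in>{z. f z \<le> L}. pmf (nstep K k x) y)
      = iter_expect k (\<lambda>z. 1 - (if z \<in> {z. f z \<le> L} then 1 else 0)) x"
    by (simp add: iter_expect_indicator_set finite_sublevel iter_expect_diff iter_expect_const)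
  also have "\<dots> \<le> iter_expect k (\<lambda>z. (1 / L) * f z) x"
    using L f_nonneg by (intro iter_expect_mono) (auto simp: field_simps)
  also have "\<dots> = iter_expect k f x / L"
    by (simp only: iter_expect_cmult) simp
  finally show ?thesis by linarith
qed

lemma average_mass_tendsto_sum_freq:
  assumes "finite F"
  shows "(\<lambda>N. (\<Sum>k<N. \<Sum>y\<in>F. pmf (nstep K k x) y) / real N) \<longlonglongrightarrow> (\<Sum>y\<in>F. freq y)"
proof -
  have "(\<lambda>N. \<Sum>y\<in>F. visits x y N / real N) \<longlonglongrightarrow> (\<Sum>y\<in>F. freq y)"
    by (intro tendsto_sum visits_average_tendsto)
  then show ?thesis
    by (simp add: sum_divide_distrib[symmetric] sum.swap[of _ F])
qed

lemma sum_freq_le_1: "finite F \<Longrightarrow> (\<Sum>y\<in>F. freq y) \<le> 1"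
proof -
  assume F: "finite F"
  fix x
  have bound: "(\<Sum>k<N. \<Sum>y\<in>F. pmf (nstep K k x) y) / real N \<le> 1" if "N \<ge> 1" for N
  proof -
    have "(\<Sum>y\<in>F. pmf (nstep K k x) y) \<le> 1" for k
      using iter_expect_mono[of "\<lambda>z. if z \<in> F then 1 else 0" "\<lambda>_. 1" k x]
      by (simp add: iter_expect_indicator_set[OF F] iter_expect_const)
    then have "(\<Sum>k<N. \<Sum>y\<in>F. pmf (nstep K k x) y) \<le> real N"
      using sum_bounded_above[of "{..<N}" "\<lambda>k. \<Sum>y\<in>F. pmf (nstep K k x) y" 1] by simp
    then show ?thesis using that by simp
  qed
  show ?thesis
    by (rule LIMSEQ_le_const2[OF average_mass_tendsto_sum_freq[OF F, of x]])
       (use bound in \<open>auto intro!: exI[of _ 1]\<close>)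
qed

text \<open>Tightness: by the drift inequality at most a fraction \<open>b / L\<close> of the time is spent
  outside the sublevel set \<open>{f \<le> L}\<close>.\<close>

lemma sum_freq_sublevel_ge: "0 < L \<Longrightarrow> 1 - b / L \<le> (\<Sum>y\<in>{z. f z \<le> L}. freq y)"
proof -
  assume L: "0 < L"
  define F where "F = {z. f z \<le> L}"
  fix x
  have "1 - (V x / real N + b) / L \<le> (\<Sum>k<N. \<Sum>y\<in>F. pmf (nstep K k x) y) / real N"
    if N: "N \<ge> 1" for N
  proof -
    have "(\<Sum>k<N. 1 - iter_expect k f x / L) \<le> (\<Sum>k<N. \<Sum>y\<in>F. pmf (nstep K k x) y)"
      using mass_sublevel_ge[OF L] unfolding F_def by (intro sum_mono)
    moreover have "(\<Sum>k<N. 1 - iter_expect k f x / L) = real N - (\<Sum>k<N. iter_expect k f x) / L"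
      by (simp add: sum_subtractf sum_divide_distrib)
    moreover have "(\<Sum>k<N. iter_expect k f x) / L \<le> (V x + real N * b) / L"
      using sum_iter_expect_penalty_le[where N=N and x=x] L by (simp add: divide_right_mono)
    ultimately have "real N - (V x + real N * b) / L \<le> (\<Sum>k<N. \<Sum>y\<in>F. pmf (nstep K k x) y)"
      by linarith
    then have "(real N - (V x + real N * b) / L) / real N \<le> (\<Sum>k<N. \<Sum>y\<in>F. pmf (nstep K k x) y) / real N"
      by (rule divide_right_mono) simp
    moreover have "(real N - (V x + real N * b) / L) / real N = 1 - (V x / real N + b) / L"
      using N L by (simp add: field_simps)
    ultimately show ?thesis by simp
  qed
  moreover have "(\<lambda>N. 1 - (V x / real N + b) / L) \<longlonglongrightarrow> 1 - (0 + b) / L"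
    by (intro tendsto_intros tendsto_divide_0[OF tendsto_const]
        filterlim_at_top_imp_at_infinity[OF filterlim_real_sequentially]) (use L in auto)
  ultimately show ?thesis
    using average_mass_tendsto_sum_freq[of F x] finite_sublevel unfolding F_def
    by (intro LIMSEQ_le[of "\<lambda>N. 1 - (V x / real N + b) / L"]) (auto simp: eventually_sequentially)
qed

lemma nn_integral_freq: "(\<integral>\<^sup>+y. ennreal (freq y) \<partial>count_space UNIV) = 1"
proof -
  have summable: "Infinite_Set_Sum.abs_summable_on freq UNIV"
    by (rule abs_summable_finite_sumsI[where B=1]) (simp add: freq_nonneg sum_freq_le_1)
  have integral: "(\<integral>\<^sup>+y. ennreal (freq y) \<partial>count_space UNIV) = ennreal (infsetsum freq UNIV)"
    by (rule nn_integral_conv_infsetsum[OF summable]) (simp add: freq_nonneg)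
  have sup: "ennreal (infsetsum freq UNIV) = (SUP F\<in>{F. finite F \<and> F \<subseteq> UNIV}. ennreal (sum freq F))"
    by (rule infsetsum_nonneg_is_SUPREMUM_ennreal[OF summable]) (simp add: freq_nonneg)
  have "ennreal (infsetsum freq UNIV) \<le> 1"
    unfolding sup by (rule SUP_least) (auto simp: sum_freq_le_1)
  then have le: "infsetsum freq UNIV \<le> 1" by (simp add: ennreal_le_1)
  have finite_le: "sum freq F \<le> infsetsum freq UNIV" if "finite F" for F
  proof -
    have "ennreal (sum freq F) \<le> ennreal (infsetsum freq UNIV)"
      unfolding sup by (rule SUP_upper) (use that in auto)
    moreover have "0 \<le> infsetsum freq UNIV" by (rule infsetsum_nonneg) (simp add: freq_nonneg)
    ultimately show ?thesis by (simp add: ennreal_le_iff)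
  qed
  have ge: "1 \<le> infsetsum freq UNIV"
  proof (rule field_le_epsilon)
    fix e :: real assume e: "0 < e"
    define L where "L = (\<bar>b\<bar> + 1) / e"
    have L: "0 < L" using e by (simp add: L_def)
    have "b / L = b * e / (\<bar>b\<bar> + 1)" using e by (simp add: L_def)
    also have "\<dots> \<le> e"
      using e by (simp add: divide_le_eq) (smt (verit, best) mult_right_mono)
    finally have "1 \<le> (\<Sum>y\<in>{z. f z \<le> L}. freq y) + e"
      using sum_freq_sublevel_ge[OF L] by linarith
    then show "1 \<le> infsetsum freq UNIV + e"
      using finite_le[OF finite_sublevel[of L]] by linarith
  qed
  show ?thesis using integral le ge by simp
qed

definition freq_pmf :: "'s pmf" where
  "freq_pmf = embed_pmf freq"

lemma pmf_freq_pmf: "pmf freq_pmf y = freq y"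
  unfolding freq_pmf_def by (rule pmf_embed_pmf) (simp_all add: freq_nonneg nn_integral_freq)

lemma pmf_bind_kernel: "pmf (p \<bind> K) y = (\<Sum>z | y \<in> set_pmf (K z). pmf (K z) y * pmf p z)"
  unfolding pmf_bind
  by (rule integral_measure_pmf_real[OF finite_predecessors]) (auto simp: set_pmf_iff)

lemma sum_predecessors_visits:
  "(\<Sum>z | y \<in> set_pmf (K z). pmf (K z) y * visits x z N) = visits x y (Suc N) - pmf (nstep K 0 x) y"
proof -
  let ?P = "{z. y \<in> set_pmf (K z)}"
  have "(\<Sum>z\<in>?P. pmf (K z) y * visits x z N) = (\<Sum>k<N. \<Sum>z\<in>?P. pmf (K z) y * pmf (nstep K k x) z)"
    by (simp add: sum_distrib_left sum.swap[of _ ?P])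
  also have "\<dots> = (\<Sum>k<N. pmf (nstep K (Suc k) x) y)"
    by (simp only: nstep.simps(2) pmf_bind_kernel)
  also have "\<dots> = visits x y (Suc N) - pmf (nstep K 0 x) y"
    by (simp only: sum.lessThan_Suc_shift)
  finally show ?thesis .
qed

lemma freq_pmf_stationary: "mc_stationary K freq_pmf"
proof -
  fix x
  have "pmf (freq_pmf \<bind> K) y = pmf freq_pmf y" for y
  proof -
    let ?P = "{z. y \<in> set_pmf (K z)}"
    have "(\<lambda>N. visits x y (Suc N) / real (Suc N) * (real (Suc N) / real N) - pmf (nstep K 0 x) y / real N)
        \<longlonglongrightarrow> freq y * 1 - 0"
      by (intro tendsto_intros LIMSEQ_Suc[OF visits_average_tendsto] LIMSEQ_Suc_n_over_n
          tendsto_divide_0[OF tendsto_const]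
          filterlim_at_top_imp_at_infinity[OF filterlim_real_sequentially])
    moreover have "\<forall>\<^sub>F N in sequentially.
        visits x y (Suc N) / real (Suc N) * (real (Suc N) / real N) - pmf (nstep K 0 x) y / real N
        = (\<Sum>z\<in>?P. pmf (K z) y * (visits x z N / real N))"
      by (intro eventually_sequentiallyI[of 1])
         (simp add: sum_divide_distrib[symmetric] sum_predecessors_visits diff_divide_distrib)
    ultimately have "(\<lambda>N. \<Sum>z\<in>?P. pmf (K z) y * (visits x z N / real N)) \<longlonglongrightarrow> freq y * 1 - 0"
      by (rule Lim_transform_eventually)
    moreover have "(\<lambda>N. \<Sum>z\<in>?P. pmf (K z) y * (visits x z N / real N)) \<longlonglongrightarrow> (\<Sum>z\<in>?P. pmf (K z) y * freq z)"
      by (intro tendsto_sum tendsto_mult_left visits_average_tendsto)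
    ultimately have "(\<Sum>z\<in>?P. pmf (K z) y * freq z) = freq y"
      using LIMSEQ_unique by fastforce
    then show ?thesis by (simp add: pmf_bind_kernel pmf_freq_pmf)
  qed
  then show ?thesis unfolding mc_stationary_def by (intro pmf_eqI) auto
qed

text \<open>A stationary \<open>q\<close> is invariant under the Cesaro averages of \<open>nstep\<close>, which converge
  boundedly to \<open>freq\<close>.\<close>

lemma stationary_unique: "mc_stationary K q \<Longrightarrow> q = freq_pmf"
proof -
  assume stat: "mc_stationary K q"
  have "pmf q y = freq y" for y
  proof -
    define s where "s N x = visits x y (Suc N) / real (Suc N)" for N x
    have integrable: "integrable (measure_pmf q) (\<lambda>x. pmf (nstep K k x) y)" for k
      by (rule measure_pmf.integrable_const_bound[where B=1]) (auto simp: pmf_le_1)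
    have invariant: "integral\<^sup>L (measure_pmf q) (\<lambda>x. pmf (nstep K k x) y) = pmf q y" for k
    proof -
      have "pmf q y = pmf (q \<bind> nstep K k) y"
        using bind_nstep_stationary[OF stat, of k] by simp
      also have "\<dots> = integral\<^sup>L (measure_pmf q) (\<lambda>x. pmf (nstep K k x) y)"
        by (rule pmf_bind)
      finally show ?thesis by simp
    qed
    have "integral\<^sup>L (measure_pmf q) (s N) = pmf q y" for N
      unfolding s_def integral_divide_zero
      by (subst Bochner_Integration.integral_sum[OF integrable]) (simp add: invariant)
    moreover have "(\<lambda>N. integral\<^sup>L (measure_pmf q) (s N)) \<longlonglongrightarrow> integral\<^sup>L (measure_pmf q) (\<lambda>_. freq y)"
    proof (rule integral_dominated_convergence[where w="\<lambda>_. 1"])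
      show "AE x in measure_pmf q. (\<lambda>N. s N x) \<longlonglongrightarrow> freq y"
        unfolding s_def by (intro AE_I2 LIMSEQ_Suc[OF visits_average_tendsto])
      show "AE x in measure_pmf q. norm (s N x) \<le> 1" for N
      proof (intro AE_I2)
        fix x
        have "visits x y (Suc N) \<le> real (Suc N)"
          using sum_bounded_above[of "{..<Suc N}" "\<lambda>k. pmf (nstep K k x) y" 1] by (simp add: pmf_le_1)
        then show "norm (s N x) \<le> 1" unfolding s_def by (simp add: sum_nonneg)
      qed
    qed auto
    ultimately show ?thesis by (simp add: LIMSEQ_const_iff)
  qed
  then show ?thesis by (intro pmf_eqI) (simp add: pmf_freq_pmf)
qed

theorem ergodic_positive_harris: "mc_ergodic K \<and> mc_positive_harris K"
proof
  show "mc_ergodic K"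
    unfolding mc_ergodic_def
    by (intro exI[of _ freq_pmf])
       (simp add: pmf_freq_pmf freq_pmf_stationary stationary_unique visits_average_tendsto)
  show "mc_positive_harris K"
    unfolding mc_positive_harris_def mc_harris_recurrent_def
    using irreducible hit_prob_eq_1 freq_pmf_stationary by blast
qed

end

section \<open>The parallel service system under softmax WSQ\<close>

lemma softmax_cost_le:
  fixes c :: "'n::finite \<Rightarrow> real"
  assumes "0 < \<iota>"
  shows "(\<Sum>a\<in>UNIV. exp (- c a / \<iota>) / (\<Sum>b\<in>UNIV. exp (- c b / \<iota>)) * c a) \<le> c j + real CARD('n) * \<iota>"
proof -
  define Z where "Z = (\<Sum>b\<in>UNIV. exp (- c b / \<iota>))"
  define p where "p a = exp (- c a / \<iota>) / Z" for a
  have Z: "0 < Z" unfolding Z_def by (intro sum_pos) auto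
  have Z_ge: "exp (- c j / \<iota>) \<le> Z" unfolding Z_def by (rule member_le_sum) auto
  have sum_p: "(\<Sum>a\<in>UNIV. p a) = 1"
    using Z by (simp add: p_def Z_def sum_divide_distrib[symmetric])
  text \<open>\<open>t e\<^sup>-\<^sup>t\<^sup>/\<^sup>\<iota> < \<iota>\<close> for \<open>t > 0\<close>: each excess cost \<open>c a - c j\<close> contributes less than \<open>\<iota>\<close>.\<close>
  have excess: "p a * (c a - c j) \<le> \<iota>" for a
  proof (cases "c a \<le> c j")
    case True
    then have "p a * (c a - c j) \<le> 0" using Z by (intro mult_nonneg_nonpos) (auto simp: p_def)
    then show ?thesis using assms by linarith
  next
    case False
    define t where "t = c a - c j"
    have t: "0 < t" using False by (simp add: t_def)
    have "p a \<le> exp (- c a / \<iota>) / exp (- c j / \<iota>)"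
      unfolding p_def using Z_ge Z by (intro divide_left_mono) (auto intro: mult_pos_pos)
    also have "\<dots> = exp (- (t / \<iota>))"
      by (simp add: t_def exp_diff[symmetric] diff_divide_distrib)
    finally have "p a * t \<le> exp (- (t / \<iota>)) * t" using t by (intro mult_right_mono) auto
    moreover have "t / \<iota> < exp (t / \<iota>)"
      using exp_ge_add_one_self[of "t / \<iota>"] by linarith
    then have "t < \<iota> * exp (t / \<iota>)"
      using assms by (simp add: divide_less_eq mult.commute)
    then have "t * exp (- (t / \<iota>)) < \<iota>" by (simp add: exp_minus field_simps)
    ultimately show ?thesis unfolding t_def by (simp add: mult.commute)
  qed
  have "(\<Sum>a\<in>UNIV. p a * c a) = (\<Sum>a\<in>UNIV. p a * (c a - c j)) + c j * (\<Sum>a\<in>UNIV. p a)"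
    by (simp add: sum_distrib_left right_diff_distrib sum_subtractf algebra_simps)
  also have "(\<Sum>a\<in>UNIV. p a * (c a - c j)) \<le> of_nat (card (UNIV::'n set)) * \<iota>"
    by (rule sum_bounded_above) (rule excess)
  finally show ?thesis using sum_p by (simp add: p_def Z_def)
qed

locale queue_system =
  fixes lam :: real and mu :: "'n::finite \<Rightarrow> real" and w :: "'n \<Rightarrow> real" and \<iota> :: real
  assumes arrival_rate_pos: "0 < lam"
    and service_rate_pos: "\<And>n. 0 < mu n"
    and weight_pos: "\<And>a. 0 < w a"
    and temperature_pos: "0 < \<iota>"
    and stability: "lam < (\<Sum>n\<in>UNIV. mu n)"
begin

abbreviation jump :: "('n \<Rightarrow> nat) \<Rightarrow> ('n \<Rightarrow> nat) pmf" where
  "jump \<equiv> qs_jump_kernel lam mu w \<iota>"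

abbreviation route :: "('n \<Rightarrow> nat) \<Rightarrow> 'n \<Rightarrow> real" where
  "route \<equiv> softmax_wsq w \<iota>"

abbreviation total_rate :: "('n \<Rightarrow> nat) \<Rightarrow> real" where
  "total_rate \<equiv> qs_total_rate lam mu"

definition arrive :: "('n \<Rightarrow> nat) \<Rightarrow> 'n \<Rightarrow> ('n \<Rightarrow> nat)" where
  "arrive x a = x(a := x a + 1)"

definition depart :: "('n \<Rightarrow> nat) \<Rightarrow> 'n \<Rightarrow> ('n \<Rightarrow> nat)" where
  "depart x n = x(n := x n - 1)"

definition neighbours :: "('n \<Rightarrow> nat) \<Rightarrow> ('n \<Rightarrow> nat) set" where
  "neighbours x = range (arrive x) \<union> depart x ` {n. 1 \<le> x n}"

lemma finite_neighbours: "finite (neighbours x)"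
  unfolding neighbours_def by auto

lemma route_pos: "0 < route x a"
  unfolding softmax_wsq_def by (intro divide_pos_pos sum_pos) auto

lemma sum_route: "(\<Sum>a\<in>UNIV. route x a) = 1"
proof -
  have "0 < (\<Sum>b\<in>UNIV. exp (- w b * (2 * real (x b) + 1) / \<iota>))" by (intro sum_pos) auto
  then show ?thesis unfolding softmax_wsq_def by (simp add: sum_divide_distrib[symmetric])
qed

lemma total_rate_ge: "lam \<le> total_rate x"
  using service_rate_pos
  by (simp add: qs_total_rate_def sum_nonneg less_imp_le)

lemma total_rate_pos: "0 < total_rate x"
  using total_rate_ge[of x] arrival_rate_pos by linarith

lemma total_rate_le: "total_rate x \<le> lam + (\<Sum>n\<in>UNIV. mu n)"
  using service_rate_pos
  by (simp add: qs_total_rate_def sum_mono less_imp_le)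

lemma qs_rate_nonneg: "0 \<le> qs_rate lam mu w \<iota> x y"
  unfolding qs_rate_def using arrival_rate_pos service_rate_pos route_pos
  by (intro add_nonneg_nonneg sum_nonneg) (auto intro: less_imp_le)

lemma qs_rate_eq_0:
  assumes "y \<notin> neighbours x"
  shows "qs_rate lam mu w \<iota> x y = 0"
proof -
  have "y \<noteq> x(a := x a + 1)" and "1 \<le> x n \<Longrightarrow> y \<noteq> x(n := x n - 1)" for a n
    using assms by (auto simp: neighbours_def arrive_def depart_def image_iff)
  then have "(\<Sum>a\<in>UNIV. if y = x(a := x a + 1) then lam * route x a else 0) = 0"
    and "(\<Sum>n\<in>UNIV. if 1 \<le> x n \<and> y = x(n := x n - 1) then mu n else 0) = 0"
    by (intro sum.neutral; auto)+
  then show ?thesis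
    unfolding qs_rate_def by simp
qed

lemma sum_qs_rate_mult: "(\<Sum>y\<in>neighbours x. qs_rate lam mu w \<iota> x y * g y) =
   lam * (\<Sum>a\<in>UNIV. route x a * g (arrive x a)) + (\<Sum>n\<in>UNIV. if 1 \<le> x n then mu n * g (depart x n) else 0)"
proof -
  have "(\<Sum>y\<in>neighbours x. (\<Sum>a\<in>UNIV. if y = x(a := x a + 1) then lam * route x a else 0) * g y)
       = (\<Sum>a\<in>UNIV. \<Sum>y\<in>neighbours x. if y = arrive x a then lam * route x a * g y else 0)"
    unfolding sum_distrib_right arrive_def by (subst sum.swap) (auto intro!: sum.cong)
  also have "\<dots> = lam * (\<Sum>a\<in>UNIV. route x a * g (arrive x a))"
    using finite_neighbours[of x]
    by (simp add: neighbours_def sum_distrib_left mult.assoc if_distrib cong: if_cong)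
  finally have arrivals: "(\<Sum>y\<in>neighbours x. (\<Sum>a\<in>UNIV. if y = x(a := x a + 1) then lam * route x a else 0) * g y)
       = lam * (\<Sum>a\<in>UNIV. route x a * g (arrive x a))" .
  have "(\<Sum>y\<in>neighbours x. (\<Sum>n\<in>UNIV. if 1 \<le> x n \<and> y = x(n := x n - 1) then mu n else 0) * g y)
       = (\<Sum>n\<in>UNIV. \<Sum>y\<in>neighbours x. if y = depart x n then (if 1 \<le> x n then mu n * g y else 0) else 0)"
    unfolding sum_distrib_right depart_def by (subst sum.swap) (auto intro!: sum.cong)
  also have "\<dots> = (\<Sum>n\<in>UNIV. if 1 \<le> x n then mu n * g (depart x n) else 0)"
    using finite_neighbours[of x] by (intro sum.cong) (auto simp: neighbours_def)
  finally have departures: "(\<Sum>y\<in>neighbours x. (\<Sum>n\<in>UNIV. if 1 \<le> x n \<and> y = x(n := x n - 1) then mu n else 0) * g y)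
       = (\<Sum>n\<in>UNIV. if 1 \<le> x n then mu n * g (depart x n) else 0)" .
  show ?thesis unfolding qs_rate_def distrib_right sum.distrib arrivals departures ..
qed

lemma sum_qs_rate: "(\<Sum>y\<in>neighbours x. qs_rate lam mu w \<iota> x y) = total_rate x"
  using sum_qs_rate_mult[of x "\<lambda>_. 1"]
  by (simp only: mult_1_right sum_route) (simp add: qs_total_rate_def)

lemma pmf_jump: "pmf (jump x) y = qs_rate lam mu w \<iota> x y / total_rate x"
proof -
  have "(\<integral>\<^sup>+y. ennreal (qs_rate lam mu w \<iota> x y / total_rate x) \<partial>count_space UNIV)
      = (\<Sum>y\<in>neighbours x. ennreal (qs_rate lam mu w \<iota> x y / total_rate x))"
    by (rule nn_integral_count_space'[OF finite_neighbours]) (auto simp: qs_rate_eq_0)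
  also have "\<dots> = ennreal ((\<Sum>y\<in>neighbours x. qs_rate lam mu w \<iota> x y) / total_rate x)"
    using qs_rate_nonneg total_rate_pos[of x] by (simp add: sum_divide_distrib)
  also have "\<dots> = 1"
    using total_rate_pos[of x] by (simp add: sum_qs_rate)
  finally show ?thesis
    unfolding qs_jump_kernel_def
    by (intro pmf_embed_pmf) (use qs_rate_nonneg total_rate_pos[of x] in auto)
qed

lemma set_pmf_jump: "set_pmf (jump x) \<subseteq> neighbours x"
  using qs_rate_eq_0 by (fastforce simp: set_pmf_iff pmf_jump)

sublocale finite_support_kernel jump
  by unfold_locales (rule finite_subset[OF set_pmf_jump finite_neighbours])

lemma expect_jump: "expect x g =
   (lam * (\<Sum>a\<in>UNIV. route x a * g (arrive x a)) + (\<Sum>n\<in>UNIV. if 1 \<le> x n then mu n * g (depart x n) else 0))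
   / total_rate x"
proof -
  have "expect x g = (\<Sum>z\<in>neighbours x. pmf (jump x) z * g z)"
    unfolding expect_def
    by (rule sum.mono_neutral_left[OF finite_neighbours set_pmf_jump]) (auto simp: set_pmf_iff)
  then show ?thesis
    by (simp add: pmf_jump sum_divide_distrib[symmetric] sum_qs_rate_mult)
qed

lemma pmf_jump_arrive_pos: "0 < pmf (jump x) (arrive x a)"
proof -
  have "lam * route x a \<le> (\<Sum>b\<in>UNIV. if arrive x a = x(b := x b + 1) then lam * route x b else 0)"
    using member_le_sum[of a UNIV "\<lambda>b. if arrive x a = x(b := x b + 1) then lam * route x b else 0"]
      arrival_rate_pos route_pos by (auto simp: arrive_def less_imp_le)
  moreover have "0 \<le> (\<Sum>n\<in>UNIV. if 1 \<le> x n \<and> arrive x a = x(n := x n - 1) then mu n else 0)"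
    using service_rate_pos by (intro sum_nonneg) (auto intro: less_imp_le)
  ultimately have "lam * route x a \<le> qs_rate lam mu w \<iota> x (arrive x a)"
    unfolding qs_rate_def by linarith
  moreover have "0 < lam * route x a" using arrival_rate_pos route_pos by simp
  ultimately show ?thesis unfolding pmf_jump using total_rate_pos by simp
qed

lemma pmf_jump_depart_pos: "1 \<le> x n \<Longrightarrow> 0 < pmf (jump x) (depart x n)"
proof -
  assume xn: "1 \<le> x n"
  have "mu n \<le> (\<Sum>m\<in>UNIV. if 1 \<le> x m \<and> depart x n = x(m := x m - 1) then mu m else 0)"
    using member_le_sum[of n UNIV "\<lambda>m. if 1 \<le> x m \<and> depart x n = x(m := x m - 1) then mu m else 0"]
      service_rate_pos xn by (auto simp: depart_def less_imp_le)
  moreover have "0 \<le> (\<Sum>b\<in>UNIV. if depart x n = x(b := x b + 1) then lam * route x b else 0)"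
    using arrival_rate_pos route_pos by (intro sum_nonneg) (auto intro: less_imp_le)
  ultimately have "mu n \<le> qs_rate lam mu w \<iota> x (depart x n)"
    unfolding qs_rate_def by linarith
  then show ?thesis unfolding pmf_jump using total_rate_pos service_rate_pos[of n] by simp
qed

text \<open>Induction on the \<open>\<ell>\<^sub>1\<close> distance: one arrival or departure moves one coordinate towards \<open>y\<close>.\<close>

lemma jump_irreducible: "mc_irreducible jump"
proof -
  have "\<exists>n. 0 < pmf (nstep jump n x) y" for x y
  proof (induction "\<Sum>a\<in>UNIV. (x a - y a) + (y a - x a)" arbitrary: x rule: less_induct)
    case less
    show ?case
    proof (cases "x = y")
      case True
      then show ?thesis by (intro exI[of _ 0]) (simp add: pmf_nstep_0)
    next
      case False
      then obtain a where a: "x a \<noteq> y a" by auto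
      show ?thesis
      proof (cases "x a < y a")
        case True
        have "(\<Sum>b\<in>UNIV. (arrive x a b - y b) + (y b - arrive x a b)) < (\<Sum>b\<in>UNIV. (x b - y b) + (y b - x b))"
          by (rule sum_strict_mono_ex1) (use True in \<open>auto simp: arrive_def intro!: bexI[of _ a]\<close>)
        then obtain m where "0 < pmf (nstep jump m (arrive x a)) y" using less by blast
        then show ?thesis using pmf_nstep_Suc_pos[OF pmf_jump_arrive_pos] by blast
      next
        case False
        then have "y a < x a" using a by simp
        then have "(\<Sum>b\<in>UNIV. (depart x a b - y b) + (y b - depart x a b)) < (\<Sum>b\<in>UNIV. (x b - y b) + (y b - x b))"
          by (intro sum_strict_mono_ex1) (auto simp: depart_def intro!: bexI[of _ a])
        then obtain m where "0 < pmf (nstep jump m (depart x a)) y" using less by blast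
        moreover have "1 \<le> x a" using \<open>y a < x a\<close> by simp
        ultimately show ?thesis using pmf_nstep_Suc_pos[OF pmf_jump_depart_pos] by blast
      qed
    qed
  qed
  then show ?thesis unfolding mc_irreducible_def by blast
qed

lemma finite_predecessors_jump: "finite {z. y \<in> set_pmf (jump z)}"
proof -
  have "{z. y \<in> set_pmf (jump z)} \<subseteq> range (\<lambda>a. y(a := y a - 1)) \<union> range (\<lambda>n. y(n := y n + 1))"
  proof
    fix z assume "z \<in> {z. y \<in> set_pmf (jump z)}"
    then have "y \<in> neighbours z" using set_pmf_jump by auto
    then consider a where "y = arrive z a" | n where "1 \<le> z n" "y = depart z n"
      unfolding neighbours_def by auto
    then show "z \<in> range (\<lambda>a. y(a := y a - 1)) \<union> range (\<lambda>n. y(n := y n + 1))"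
    proof cases
      case 1
      then have "z = y(a := y a - 1)" by (auto simp: arrive_def fun_eq_iff)
      then show ?thesis by blast
    next
      case 2
      then have "z = y(n := y n + 1)" by (auto simp: depart_def fun_eq_iff)
      then show ?thesis by blast
    qed
  qed
  then show ?thesis by (rule finite_subset) auto
qed

definition lyapunov :: "('n \<Rightarrow> nat) \<Rightarrow> real" where
  "lyapunov x = (\<Sum>a\<in>UNIV. w a * real (x a) ^ 2)"

definition weighted_work :: "('n \<Rightarrow> nat) \<Rightarrow> real" where
  "weighted_work x = (\<Sum>n\<in>UNIV. mu n * w n * real (x n))"

definition load :: real where
  "load = lam / (\<Sum>n\<in>UNIV. mu n)"

definition weight_rate :: real where
  "weight_rate = (\<Sum>n\<in>UNIV. mu n * w n)"

definition penalty :: "('n \<Rightarrow> nat) \<Rightarrow> real" where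
  "penalty x = 2 * (1 - load) * weighted_work x / (lam + (\<Sum>n\<in>UNIV. mu n))"

definition drift_bound :: real where
  "drift_bound = (2 * weight_rate + lam * real CARD('n) * \<iota>) / lam"

lemma total_service_rate_pos: "0 < (\<Sum>n\<in>UNIV. mu n)"
  using arrival_rate_pos stability by linarith

lemma load_nonneg: "0 \<le> load"
  using arrival_rate_pos total_service_rate_pos by (simp add: load_def)

lemma load_less_1: "load < 1"
  using stability total_service_rate_pos by (simp add: load_def)

lemma weight_rate_nonneg: "0 \<le> weight_rate"
  unfolding weight_rate_def using service_rate_pos weight_pos
  by (intro sum_nonneg) (auto intro: less_imp_le)

lemma weighted_work_nonneg: "0 \<le> weighted_work x"
  unfolding weighted_work_def using service_rate_pos weight_pos
  by (intro sum_nonneg mult_nonneg_nonneg) (simp_all add: less_imp_le)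

lemma lyapunov_nonneg: "0 \<le> lyapunov x"
  unfolding lyapunov_def using weight_pos
  by (intro sum_nonneg mult_nonneg_nonneg) (simp_all add: less_imp_le)

lemma penalty_nonneg: "0 \<le> penalty x"
  unfolding penalty_def using load_less_1 weighted_work_nonneg total_service_rate_pos arrival_rate_pos
  by simp

lemma lyapunov_arrive: "lyapunov (arrive x a) = lyapunov x + w a * (2 * real (x a) + 1)"
proof -
  have "lyapunov (arrive x a) =
      (\<Sum>b\<in>UNIV. w b * real (x b) ^ 2 + (if b = a then w a * (2 * real (x a) + 1) else 0))"
    unfolding lyapunov_def arrive_def by (intro sum.cong) (auto simp: power2_eq_square algebra_simps)
  then show ?thesis by (simp add: sum.distrib lyapunov_def)
qed

lemma lyapunov_depart: "1 \<le> x n \<Longrightarrow> lyapunov (depart x n) = lyapunov x - w n * (2 * real (x n) - 1)"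
proof -
  assume "1 \<le> x n"
  then have "lyapunov (depart x n) =
      (\<Sum>b\<in>UNIV. w b * real (x b) ^ 2 - (if b = n then w n * (2 * real (x n) - 1) else 0))"
    unfolding lyapunov_def depart_def
    by (intro sum.cong) (auto simp: power2_eq_square algebra_simps of_nat_diff)
  then show ?thesis by (simp add: sum_subtractf lyapunov_def)
qed

abbreviation routing_cost :: "('n \<Rightarrow> nat) \<Rightarrow> 'n \<Rightarrow> real" where
  "routing_cost x a \<equiv> w a * (2 * real (x a) + 1)"

abbreviation service_gain :: "('n \<Rightarrow> nat) \<Rightarrow> real" where
  "service_gain x \<equiv> (\<Sum>n\<in>UNIV. if 1 \<le> x n then mu n * (w n * (2 * real (x n) - 1)) else 0)"

lemma expect_lyapunov: "expect x lyapunov =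
    lyapunov x + (lam * (\<Sum>a\<in>UNIV. route x a * routing_cost x a) - service_gain x) / total_rate x"
proof -
  have arrivals: "(\<Sum>a\<in>UNIV. route x a * lyapunov (arrive x a))
      = lyapunov x + (\<Sum>a\<in>UNIV. route x a * routing_cost x a)"
    by (simp add: lyapunov_arrive distrib_left sum.distrib sum_distrib_right[symmetric] sum_route)
  have departures: "(\<Sum>n\<in>UNIV. if 1 \<le> x n then mu n * lyapunov (depart x n) else 0) =
      (\<Sum>n\<in>UNIV. if 1 \<le> x n then mu n else 0) * lyapunov x - service_gain x"
  proof -
    have "(\<Sum>n\<in>UNIV. if 1 \<le> x n then mu n * lyapunov (depart x n) else 0) =
        (\<Sum>n\<in>UNIV. (if 1 \<le> x n then mu n else 0) * lyapunov x
          - (if 1 \<le> x n then mu n * (w n * (2 * real (x n) - 1)) else 0))"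
      by (intro sum.cong) (auto simp: lyapunov_depart algebra_simps)
    then show ?thesis by (simp add: sum_subtractf sum_distrib_right)
  qed
  have "expect x lyapunov = (total_rate x * lyapunov x
      + (lam * (\<Sum>a\<in>UNIV. route x a * routing_cost x a) - service_gain x)) / total_rate x"
    unfolding expect_jump arrivals departures by (simp add: qs_total_rate_def algebra_simps)
  then show ?thesis using total_rate_pos[of x] by (simp add: field_simps)
qed

text \<open>The softmax routing cost is within \<open>N\<iota>\<close> of that of any queue, in particular of the
  \<open>\<mu>\<close>-weighted average queue; this is where \<open>\<lambda> < \<Sum> \<mu>\<close> enters.\<close>

lemma arrival_gain_le:
  "lam * (\<Sum>a\<in>UNIV. route x a * routing_cost x a)
    \<le> load * (2 * weighted_work x + weight_rate) + lam * real CARD('n) * \<iota>"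
proof -
  define T where "T = (\<Sum>a\<in>UNIV. route x a * routing_cost x a)"
  have cost: "T \<le> routing_cost x j + real CARD('n) * \<iota>" for j
    using softmax_cost_le[OF temperature_pos, of "routing_cost x" j]
    by (simp add: T_def softmax_wsq_def)
  have "(\<Sum>n\<in>UNIV. mu n) * T = (\<Sum>j\<in>UNIV. mu j * T)"
    by (simp add: sum_distrib_right)
  also have "\<dots> \<le> (\<Sum>j\<in>UNIV. mu j * (routing_cost x j + real CARD('n) * \<iota>))"
    using service_rate_pos by (intro sum_mono mult_left_mono cost) (auto intro: less_imp_le)
  also have "\<dots> = (2 * weighted_work x + weight_rate) + real CARD('n) * \<iota> * (\<Sum>n\<in>UNIV. mu n)"
    unfolding weighted_work_def weight_rate_def
    by (simp add: algebra_simps sum.distrib sum_distrib_left sum_distrib_right)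
  finally have "T \<le> (2 * weighted_work x + weight_rate) / (\<Sum>n\<in>UNIV. mu n) + real CARD('n) * \<iota>"
    using total_service_rate_pos by (simp add: field_simps)
  then have "lam * T \<le> lam * ((2 * weighted_work x + weight_rate) / (\<Sum>n\<in>UNIV. mu n) + real CARD('n) * \<iota>)"
    using arrival_rate_pos by (intro mult_left_mono) auto
  then show ?thesis
    unfolding T_def load_def by (simp add: algebra_simps add_divide_distrib)
qed

lemma service_gain_ge: "2 * weighted_work x - weight_rate \<le> service_gain x"
proof -
  have "2 * weighted_work x - weight_rate = (\<Sum>n\<in>UNIV. mu n * (w n * (2 * real (x n) - 1)))"
    unfolding weighted_work_def weight_rate_def
    by (simp add: algebra_simps sum.distrib sum_subtractf sum_distrib_left)
  also have "\<dots> \<le> service_gain x"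
  proof (intro sum_mono)
    fix n
    have "0 < mu n * w n" using service_rate_pos weight_pos by simp
    then show "mu n * (w n * (2 * real (x n) - 1))
        \<le> (if 1 \<le> x n then mu n * (w n * (2 * real (x n) - 1)) else 0)"
      by (auto simp: not_le algebra_simps)
  qed
  finally show ?thesis .
qed

lemma lyapunov_drift: "expect x lyapunov \<le> lyapunov x - penalty x + drift_bound"
proof -
  define D where "D = lam * (\<Sum>a\<in>UNIV. route x a * routing_cost x a) - service_gain x"
  define c where "c = 2 * weight_rate + lam * real CARD('n) * \<iota>"
  have "load * weight_rate \<le> weight_rate"
    using load_less_1 by (intro mult_left_le_one_le weight_rate_nonneg load_nonneg) simp
  then have D: "D \<le> - (2 * (1 - load) * weighted_work x) + c"
    unfolding D_def c_def using arrival_gain_le[of x] service_gain_ge[of x] by (simp add: algebra_simps)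
  have work: "0 \<le> 2 * (1 - load) * weighted_work x"
    using load_less_1 weighted_work_nonneg by simp
  have c: "0 \<le> c"
    unfolding c_def using weight_rate_nonneg arrival_rate_pos temperature_pos by simp
  have "D / total_rate x \<le> (- (2 * (1 - load) * weighted_work x) + c) / total_rate x"
    using D total_rate_pos[of x] by (intro divide_right_mono) auto
  also have "\<dots> = - (2 * (1 - load) * weighted_work x / total_rate x) + c / total_rate x"
    by (simp only: add_divide_distrib minus_divide_left)
  also have "\<dots> \<le> - penalty x + drift_bound"
  proof -
    have "penalty x \<le> 2 * (1 - load) * weighted_work x / total_rate x"
      unfolding penalty_def using work total_rate_pos[of x] total_rate_le[of x]
      by (intro divide_left_mono) auto
    moreover have "c / total_rate x \<le> drift_bound"
      unfolding drift_bound_def c_def[symmetric] using c total_rate_ge[of x] arrival_rate_pos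
      by (intro divide_left_mono) auto
    ultimately show ?thesis by linarith
  qed
  finally show ?thesis unfolding expect_lyapunov D_def[symmetric] by simp
qed

lemma finite_penalty_sublevel: "finite {x. penalty x \<le> L}"
proof -
  define m0 where "m0 = Min (range (\<lambda>n. mu n * w n))"
  have m0_pos: "0 < m0"
    unfolding m0_def using service_rate_pos weight_pos by (subst Min_gr_iff) auto
  have m0_le: "m0 \<le> mu n * w n" for n
    unfolding m0_def by (rule Min_le) auto
  define M where "M = L * (lam + (\<Sum>n\<in>UNIV. mu n)) / (2 * (1 - load))"
  define B where "B = nat \<lceil>M / m0\<rceil>"
  have "{x. penalty x \<le> L} \<subseteq> {x. \<forall>n. x n \<le> B}"
  proof (intro subsetI CollectI allI)
    fix x n assume "x \<in> {x. penalty x \<le> L}"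
    then have "weighted_work x \<le> M"
      using load_less_1 arrival_rate_pos total_service_rate_pos
      by (simp add: penalty_def M_def field_simps)
    moreover have "mu n * w n * real (x n) \<le> weighted_work x"
      unfolding weighted_work_def using service_rate_pos weight_pos
      by (intro member_le_sum[of n UNIV "\<lambda>n. mu n * w n * real (x n)"])
         (auto simp: less_imp_le intro!: mult_nonneg_nonneg)
    moreover have "m0 * real (x n) \<le> mu n * w n * real (x n)"
      using m0_le[of n] by (intro mult_right_mono) auto
    ultimately have "m0 * real (x n) \<le> M"
      by linarith
    then have "real (x n) \<le> M / m0"
      using m0_pos by (simp add: field_simps)
    then show "x n \<le> B"
      unfolding B_def by linarith
  qed
  moreover have "finite {x :: 'n \<Rightarrow> nat. \<forall>n. x n \<le> B}"
    using finite_set_of_finite_funs[of "UNIV :: 'n set" "{..B}" 0] by simp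
  ultimately show ?thesis by (rule finite_subset)
qed

theorem jump_ergodic_positive_harris:
  "mc_irreducible jump \<and> mc_ergodic jump \<and> mc_positive_harris jump"
proof -
  interpret foster_lyapunov jump lyapunov penalty drift_bound
    by unfold_locales (simp_all add: lyapunov_nonneg penalty_nonneg lyapunov_drift
        finite_penalty_sublevel jump_irreducible finite_predecessors_jump)
  show ?thesis using ergodic_positive_harris jump_irreducible by blast
qed

end

text \<open>The drift bound holds for every temperature, so any \<open>\<iota>\<^sub>0\<close> will do.\<close>

theorem mainTheorem3:
  fixes lam :: real and mu :: "'n::finite \<Rightarrow> real"
  assumes "lam > 0"
    and "\<forall>n. mu n > 0"
    and "lam < (\<Sum>n\<in>UNIV. mu n)"
  shows "\<exists>\<iota>0 > 0. \<forall>\<iota>. 0 < \<iota> \<and> \<iota> < \<iota>0 \<longrightarrow>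
           (\<forall>w :: 'n \<Rightarrow> real. (\<forall>a. w a > 0) \<longrightarrow>
              mc_irreducible (qs_jump_kernel lam mu w \<iota>) \<and>
              mc_ergodic (qs_jump_kernel lam mu w \<iota>) \<and>
              mc_positive_harris (qs_jump_kernel lam mu w \<iota>))"
proof -
  have "mc_irreducible (qs_jump_kernel lam mu w \<iota>) \<and> mc_ergodic (qs_jump_kernel lam mu w \<iota>) \<and>
      mc_positive_harris (qs_jump_kernel lam mu w \<iota>)"
    if "0 < \<iota>" and "\<forall>a. 0 < w a" for \<iota> :: real and w :: "'n \<Rightarrow> real"
  proof -
    interpret queue_system lam mu w \<iota>
      using assms that by unfold_locales auto
    show ?thesis by (rule jump_ergodic_positive_harris)
  qed
  then show ?thesis by (intro exI[of _ 1]) auto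
qed

end
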